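(* Let $x\in(1,\infty)$, $y\in S^1=\mathbf{R}/2\pi\mathbf{Z}$, and let $dA=\frac{1}{|x|}\,dx\,dy$. Consider the operator $$\Delta_{ex}=\partial_x^2+x^2\partial_y^2-\frac{1}{x}\partial_x+\frac{(x^4+1)^2}{4x^2(x^4-1)}$$ with domain $C^\infty_0((1,\infty)\times S^1)$. Then $\Delta_{ex}$ is not essentially self-adjoint in $L^2((1,\infty)\times S^1,dA)$.
   Context: The Grushin cylinder is $\mathbf{R}\times S^1$ with the (generalized) Riemannian metric $\mathrm{diag}(1,1/x^2)$ in coordinates $(x,y)$; its Riemannian area is $dA=\frac{1}{|x|}dx\,dy$, its Laplace–Beltrami operator (divergence w.r.t. $dA$ of the gradient) is $\Delta=\partial_x^2+x^2\partial_y^2-\frac1x\partial_x$, and its Gaussian curvature is $K=-2/x^2$. For $x\ge 1$ the half-cylinder is isometrically embedded in $\mathbf{R}^3$ as the surface of revolution $z_1=\frac1x\cos y$, $z_2=\frac1x\sin y$, $z_3=1+\int_1^x\sqrt{1-s^{-4}}\,ds$, whose mean curvature is $H=\frac{x^4-3}{2x\sqrt{x^4-1}}$. The extrinsic Laplacian is $\Delta_{ex}=\Delta-K+H^2$, which equals the displayed operator. *)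

theory Defs
  imports "HOL-Analysis.Analysis"
begin

text \<open>Functions on the half-cylinder, written in coordinates (x,y) in R x R;
  the circle variable y is taken mod 2 pi (test functions are 2 pi-periodic in y,
  and the L2 space is realised on (1,inf) x [0, 2 pi)).\<close>

type_synonym cfun = "real \<times> real \<Rightarrow> complex"

definition pdx :: "cfun \<Rightarrow> cfun" where
  "pdx f = (\<lambda>(x, y). vector_derivative (\<lambda>t. f (t, y)) (at x))"

definition pdy :: "cfun \<Rightarrow> cfun" where
  "pdy f = (\<lambda>(x, y). vector_derivative (\<lambda>t. f (x, t)) (at y))"

fun iter_partials :: "nat \<Rightarrow> cfun \<Rightarrow> cfun set" where
  "iter_partials 0 f = {f}"
| "iter_partials (Suc n) f = (\<Union>g\<in>iter_partials n f. {pdx g, pdy g})"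

definition smooth2 :: "cfun \<Rightarrow> bool" where
  "smooth2 f \<longleftrightarrow> (\<forall>n. \<forall>g\<in>iter_partials n f.
      continuous_on UNIV g \<and>
      (\<forall>x y. (\<lambda>t. g (t, y)) differentiable (at x) \<and> (\<lambda>t. g (x, t)) differentiable (at y)))"

definition test_functions :: "cfun set" where
  "test_functions = {\<phi>. smooth2 \<phi> \<and> (\<forall>x y. \<phi> (x, y + 2 * pi) = \<phi> (x, y)) \<and>
      (\<exists>a b. 1 < a \<and> (\<forall>x y. (x \<le> a \<or> b \<le> x) \<longrightarrow> \<phi> (x, y) = 0))}"

definition dA :: "(real \<times> real) measure" where
  "dA = density lborel (\<lambda>p. indicator ({1<..} \<times> {0..<2 * pi}) p * ennreal (1 / \<bar>fst p\<bar>))"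

definition L2 :: "cfun \<Rightarrow> bool" where
  "L2 f \<longleftrightarrow> f \<in> borel_measurable dA \<and> integrable dA (\<lambda>p. (cmod (f p))\<^sup>2)"

definition L2_inner :: "cfun \<Rightarrow> cfun \<Rightarrow> complex" where
  "L2_inner f g = integral\<^sup>L dA (\<lambda>p. f p * cnj (g p))"

definition L2_dist2 :: "cfun \<Rightarrow> cfun \<Rightarrow> real" where
  "L2_dist2 f g = integral\<^sup>L dA (\<lambda>p. (cmod (f p - g p))\<^sup>2)"

text \<open>Operators are treated via their graphs (sets of pairs of L2 representatives;
  all notions below are invariant under a.e. equality).\<close>
definition graph_closure :: "(cfun \<times> cfun) set \<Rightarrow> (cfun \<times> cfun) set" where
  "graph_closure G = {(u, v). L2 u \<and> L2 v \<and>
     (\<exists>s. (\<forall>n. s n \<in> G) \<and> (\<lambda>n. L2_dist2 (fst (s n)) u) \<longlonglongrightarrow> 0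
                       \<and> (\<lambda>n. L2_dist2 (snd (s n)) v) \<longlonglongrightarrow> 0)}"

definition graph_adjoint :: "(cfun \<times> cfun) set \<Rightarrow> (cfun \<times> cfun) set" where
  "graph_adjoint G = {(u, w). L2 u \<and> L2 w \<and>
     (\<forall>(f, g)\<in>G. L2_inner g u = L2_inner f w)}"

definition self_adjoint_graph :: "(cfun \<times> cfun) set \<Rightarrow> bool" where
  "self_adjoint_graph G \<longleftrightarrow> G = graph_adjoint G"

definition essentially_self_adjoint :: "(cfun \<times> cfun) set \<Rightarrow> bool" where
  "essentially_self_adjoint G \<longleftrightarrow> self_adjoint_graph (graph_closure G)"

definition Delta_ex :: "cfun \<Rightarrow> cfun" where
  "Delta_ex \<phi> = (\<lambda>(x, y). pdx (pdx \<phi>) (x, y) + complex_of_real (x\<^sup>2) * pdy (pdy \<phi>) (x, y)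
      - complex_of_real (1 / x) * pdx \<phi> (x, y)
      + complex_of_real ((x ^ 4 + 1)\<^sup>2 / (4 * x\<^sup>2 * (x ^ 4 - 1))) * \<phi> (x, y))"

definition Delta_ex_graph :: "(cfun \<times> cfun) set" where
  "Delta_ex_graph = {(\<phi>, Delta_ex \<phi>) | \<phi>. \<phi> \<in> test_functions}"

end

theory Submission
  imports Defs "HOL-Real_Asymp.Real_Asymp"
begin

(* For a function u of x alone, Delta_ex u = u'' - u'/x + V u with
   V x = (x^4 + 1)^2 / (4 x^2 (x^4 - 1)), and Green's formula for dA = dx dy / x shows that
   (u, Delta_ex u) lies in the adjoint of Delta_ex on test functions whenever both are square
   integrable.  Near the boundary x = 1 one has V x ~ 1 / (4 (x - 1)), so both solutions of
   Delta_ex u = 0, which behave like 1 - (x - 1) ln (x - 1) / 4 and x - 1, are square integrable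
   there (limit circle case).  Cut off near x = 2, they give two elements u1, u2 of the adjoint
   whose boundary form <Delta_ex u1, u2> - <u1, Delta_ex u2> is -2 pi times the limit at x = 1 of
   the Wronskian (u2 u1' - u2' u1) / x, that is 2 pi.  So the adjoint is not symmetric, whereas
   a self-adjoint closure would coincide with its own adjoint, which is the adjoint of Delta_ex. *)

section \<open>Square-integrable functions and adjoints of graphs\<close>

lemma sets_dA: "sets dA = sets borel"
  by (simp add: dA_def)

lemma borel_measurable_cnj [measurable]:
  "f \<in> borel_measurable M \<Longrightarrow> (\<lambda>x. cnj (f x)) \<in> borel_measurable M"
  by (rule borel_measurable_continuous_on[OF continuous_on_cnj[OF continuous_on_id]])

lemma norm_mult_cnj_le:
  fixes a b :: complex
  assumes "e > 0"
  shows "cmod (a * cnj b) \<le> (cmod a)\<^sup>2 / (2 * e) + e * (cmod b)\<^sup>2 / 2"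
proof -
  have "0 \<le> (cmod a - e * cmod b)\<^sup>2" by simp
  then have "2 * e * (cmod a * cmod b) \<le> (cmod a)\<^sup>2 + e\<^sup>2 * (cmod b)\<^sup>2"
    by (simp add: power2_eq_square algebra_simps)
  with assms show ?thesis
    by (simp add: norm_mult field_simps power2_eq_square)
qed

lemma integrable_L2_product:
  assumes "L2 f" "L2 g"
  shows "integrable dA (\<lambda>p. f p * cnj (g p))"
proof (rule Bochner_Integration.integrable_bound)
  show "integrable dA (\<lambda>p. (cmod (f p))\<^sup>2 / 2 + (cmod (g p))\<^sup>2 / 2)"
    using assms by (auto simp: L2_def)
  have "f \<in> borel_measurable dA" "g \<in> borel_measurable dA"
    using assms by (simp_all add: L2_def)
  then show "(\<lambda>p. f p * cnj (g p)) \<in> borel_measurable dA"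
    by measurable
  have "cmod (f p * cnj (g p)) \<le> (cmod (f p))\<^sup>2 / 2 + (cmod (g p))\<^sup>2 / 2" for p
    using norm_mult_cnj_le[of 1 "f p" "g p"] by simp
  then show "AE p in dA. norm (f p * cnj (g p)) \<le> norm ((cmod (f p))\<^sup>2 / 2 + (cmod (g p))\<^sup>2 / 2)"
    by (intro AE_I2) simp
qed

lemma L2_diff:
  assumes "L2 f" "L2 g"
  shows "L2 (\<lambda>p. f p - g p)"
  unfolding L2_def
proof
  have "f \<in> borel_measurable dA" "g \<in> borel_measurable dA"
    using assms by (simp_all add: L2_def)
  then show diff: "(\<lambda>p. f p - g p) \<in> borel_measurable dA"
    by measurable
  have "(cmod (a - b))\<^sup>2 \<le> 2 * (cmod a)\<^sup>2 + 2 * (cmod b)\<^sup>2" for a b :: complex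
  proof -
    have "(cmod (a - b))\<^sup>2 \<le> (cmod a + cmod b)\<^sup>2"
      by (simp add: power_mono norm_triangle_ineq4)
    also have "\<dots> \<le> 2 * (cmod a)\<^sup>2 + 2 * (cmod b)\<^sup>2"
      using sum_squares_ge_zero[of "cmod a - cmod b" 0] by (simp add: power2_eq_square algebra_simps)
    finally show ?thesis .
  qed
  note bound = this
  show "integrable dA (\<lambda>p. (cmod (f p - g p))\<^sup>2)"
  proof (rule Bochner_Integration.integrable_bound)
    show "integrable dA (\<lambda>p. 2 * (cmod (f p))\<^sup>2 + 2 * (cmod (g p))\<^sup>2)"
      using assms by (simp add: L2_def)
    show "(\<lambda>p. (cmod (f p - g p))\<^sup>2) \<in> borel_measurable dA"
      using diff by measurable
    show "AE p in dA. norm ((cmod (f p - g p))\<^sup>2) \<le> norm (2 * (cmod (f p))\<^sup>2 + 2 * (cmod (g p))\<^sup>2)"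
      using bound by (intro AE_I2) simp
  qed
qed

lemma norm_L2_inner_le:
  assumes "L2 f" "L2 g" "e > 0"
  shows "cmod (L2_inner f g) \<le> integral\<^sup>L dA (\<lambda>p. (cmod (f p))\<^sup>2) / (2 * e)
            + e * integral\<^sup>L dA (\<lambda>p. (cmod (g p))\<^sup>2) / 2"
proof -
  have "cmod (L2_inner f g) \<le> integral\<^sup>L dA (\<lambda>p. cmod (f p * cnj (g p)))"
    unfolding L2_inner_def by (rule integral_norm_bound)
  also have "\<dots> \<le> integral\<^sup>L dA (\<lambda>p. (cmod (f p))\<^sup>2 / (2 * e) + e * (cmod (g p))\<^sup>2 / 2)"
    using assms integrable_L2_product[OF assms(1,2)] norm_mult_cnj_le[OF assms(3)]
    unfolding L2_def by (intro integral_mono) auto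
  also have "\<dots> = integral\<^sup>L dA (\<lambda>p. (cmod (f p))\<^sup>2) / (2 * e)
            + e * integral\<^sup>L dA (\<lambda>p. (cmod (g p))\<^sup>2) / 2"
    using assms unfolding L2_def by simp
  finally show ?thesis .
qed

lemma tendsto_L2_inner:
  assumes "L2 u" "L2 z" "\<And>n. L2 (f n)" and lim: "(\<lambda>n. L2_dist2 (f n) u) \<longlonglongrightarrow> 0"
  shows "(\<lambda>n. L2_inner (f n) z) \<longlonglongrightarrow> L2_inner u z"
proof (rule tendstoI)
  fix r :: real
  assume "r > 0"
  define Z where "Z = integral\<^sup>L dA (\<lambda>p. (cmod (z p))\<^sup>2)"
  have "Z \<ge> 0" unfolding Z_def by (rule integral_nonneg_AE) auto
  define e where "e = r / (Z + 1)"
  have "e > 0" using \<open>r > 0\<close> \<open>Z \<ge> 0\<close> by (simp add: e_def)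
  have "e * Z < r"
  proof -
    have "e * Z < e * (Z + 1)" using \<open>e > 0\<close> by simp
    then show ?thesis using \<open>Z \<ge> 0\<close> by (simp add: e_def)
  qed
  have "eventually (\<lambda>n. dist (L2_dist2 (f n) u) 0 < r * e) sequentially"
    using lim \<open>r > 0\<close> \<open>e > 0\<close> by (intro tendstoD) auto
  then show "eventually (\<lambda>n. dist (L2_inner (f n) z) (L2_inner u z) < r) sequentially"
  proof eventually_elim
    case (elim n)
    have "L2_inner (f n) z - L2_inner u z = L2_inner (\<lambda>p. f n p - u p) z"
      unfolding L2_inner_def
      using integrable_L2_product[OF assms(3) assms(2)] integrable_L2_product[OF assms(1,2)]
      by (simp add: algebra_simps)
    then have "dist (L2_inner (f n) z) (L2_inner u z) = cmod (L2_inner (\<lambda>p. f n p - u p) z)"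
      by (simp add: dist_norm)
    also have "\<dots> \<le> L2_dist2 (f n) u / (2 * e) + e * Z / 2"
      using norm_L2_inner_le[OF L2_diff[OF assms(3,1)] assms(2) \<open>e > 0\<close>]
      by (simp add: L2_dist2_def Z_def)
    also have "L2_dist2 (f n) u / (2 * e) < r / 2"
      using elim \<open>e > 0\<close> by (simp add: dist_real_def field_simps)
    finally show ?case using \<open>e * Z < r\<close> by linarith
  qed
qed

lemma graph_adjoint_pairing_closure:
  assumes G: "\<And>f g. (f, g) \<in> G \<Longrightarrow> L2 f \<and> L2 g"
    and "(u, w) \<in> graph_adjoint G" and "(f, g) \<in> graph_closure G"
  shows "L2_inner g u = L2_inner f w"
proof -
  from \<open>(u, w) \<in> graph_adjoint G\<close> have "L2 u" "L2 w"
    and adjoint: "\<And>f g. (f, g) \<in> G \<Longrightarrow> L2_inner g u = L2_inner f w"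
    by (auto simp: graph_adjoint_def)
  from \<open>(f, g) \<in> graph_closure G\<close> obtain s where "L2 f" "L2 g" "\<And>n. s n \<in> G"
    and lim: "(\<lambda>n. L2_dist2 (fst (s n)) f) \<longlonglongrightarrow> 0" "(\<lambda>n. L2_dist2 (snd (s n)) g) \<longlonglongrightarrow> 0"
    by (auto simp: graph_closure_def)
  have "L2 (fst (s n))" "L2 (snd (s n))" for n
    using G[of "fst (s n)" "snd (s n)"] \<open>s n \<in> G\<close> by auto
  then have "(\<lambda>n. L2_inner (snd (s n)) u) \<longlonglongrightarrow> L2_inner g u"
    and "(\<lambda>n. L2_inner (fst (s n)) w) \<longlonglongrightarrow> L2_inner f w"
    using lim \<open>L2 u\<close> \<open>L2 w\<close> \<open>L2 f\<close> \<open>L2 g\<close> by (auto intro: tendsto_L2_inner)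
  moreover have "L2_inner (snd (s n)) u = L2_inner (fst (s n)) w" for n
    using adjoint[of "fst (s n)" "snd (s n)"] \<open>s n \<in> G\<close> by simp
  ultimately show ?thesis
    using LIMSEQ_unique by auto
qed

lemma not_essentially_self_adjoint_if_adjoint_not_symmetric:
  assumes G: "\<And>f g. (f, g) \<in> G \<Longrightarrow> L2 f \<and> L2 g"
    and adjoint: "(u1, w1) \<in> graph_adjoint G" "(u2, w2) \<in> graph_adjoint G"
    and "L2_inner w1 u2 \<noteq> L2_inner u1 w2"
  shows "\<not> essentially_self_adjoint G"
proof
  assume "essentially_self_adjoint G"
  then have closure_eq: "graph_closure G = graph_adjoint (graph_closure G)"
    by (simp add: essentially_self_adjoint_def self_adjoint_graph_def)
  have "(u1, w1) \<in> graph_adjoint (graph_closure G)"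
    using adjoint(1) graph_adjoint_pairing_closure[OF G adjoint(1)]
    by (auto simp: graph_adjoint_def)
  then have "(u1, w1) \<in> graph_closure G"
    using closure_eq by simp
  then have "L2_inner w1 u2 = L2_inner u1 w2"
    using graph_adjoint_pairing_closure[OF G adjoint(2)] by blast
  with \<open>L2_inner w1 u2 \<noteq> L2_inner u1 w2\<close> show False ..
qed

section \<open>Integration against dA\<close>

definition dA_density :: "real \<times> real \<Rightarrow> real" where
  "dA_density p = indicator ({1<..} \<times> {0..<2 * pi}) p / \<bar>fst p\<bar>"

lemma dA_eq_density: "dA = density lborel (\<lambda>p. ennreal (dA_density p))"
  unfolding dA_def dA_density_def
  by (rule arg_cong[where f = "density lborel"]) (auto simp: fun_eq_iff indicator_def)

lemma borel_measurable_dA_density: "dA_density \<in> borel_measurable borel"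
proof -
  have "{1<..} \<times> {0..<2 * pi} \<in> sets (borel :: (real \<times> real) measure)"
    unfolding borel_prod[symmetric] by (intro pair_measureI) auto
  then show ?thesis
    unfolding dA_density_def
    by (intro borel_measurable_divide borel_measurable_indicator borel_measurable_abs
        borel_measurable_continuous_onI continuous_intros)
qed

lemma AE_in_cbox_iff_in_strip:
  fixes a b :: real
  assumes "1 \<le> a"
  shows "AE p in lborel. (p \<in> cbox (a, 0) (b, 2 * pi)) = (p \<in> ({1<..} \<inter> {a..b}) \<times> {0..<2 * pi})"
proof -
  have "{1::real} \<times> (UNIV :: real set) \<union> UNIV \<times> {2 * pi} \<in> null_sets lborel"
    unfolding lborel_prod[symmetric]
    by (intro null_sets.Un sigma_finite_measure.times_in_null_sets1 sigma_finite_measure.times_in_null_sets2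
        sigma_finite_lborel) auto
  then show ?thesis
    by (rule AE_I') (use assms in \<open>auto simp: cbox_Pair_eq\<close>)
qed

lemma
  fixes F H :: "real \<times> real \<Rightarrow> 'a::euclidean_space"
  assumes "1 \<le> a" "a \<le> b" and F: "F \<in> borel_measurable borel"
    and H: "continuous_on (cbox (a, 0) (b, 2 * pi)) H"
    and F_eq: "\<And>x y. 1 < x \<Longrightarrow> 0 \<le> y \<Longrightarrow> y < 2 * pi \<Longrightarrow>
               F (x, y) = (if a \<le> x \<and> x \<le> b then x *\<^sub>R H (x, y) else 0)"
  shows integrable_dA_cbox: "integrable dA F"
    and integral_dA_cbox: "integral\<^sup>L dA F = integral (cbox (a, 0) (b, 2 * pi)) H"
proof -
  define S :: "(real \<times> real) set" where "S = ({1<..} \<inter> {a..b}) \<times> {0..<2 * pi}"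
  define K :: "(real \<times> real) set" where "K = cbox (a, 0) (b, 2 * pi)"
  have density: "dA_density \<in> borel_measurable borel" "\<And>p. dA_density p \<ge> 0"
    using borel_measurable_dA_density by (simp_all add: dA_density_def)
  have S: "S \<in> sets lborel" "S \<subseteq> K"
    using \<open>1 \<le> a\<close> unfolding S_def K_def sets_lborel borel_prod[symmetric]
    by (auto intro!: pair_measureI simp: cbox_Pair_eq)
  have density_eq: "dA_density p *\<^sub>R F p = indicator S p *\<^sub>R H p" for p
    using F_eq[of "fst p" "snd p"] by (cases p) (auto simp: dA_density_def S_def indicator_def)
  have "set_integrable lborel K H"
    unfolding set_integrable_def K_def
    by (rule borel_integrable_compact) (simp_all add: compact_cbox H)
  then have S_integrable: "set_integrable lborel S H"
    by (rule set_integrable_subset) (use S in auto)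
  then have "integrable lborel (\<lambda>p. dA_density p *\<^sub>R F p)"
    by (simp add: density_eq set_integrable_def)
  then show "integrable dA F"
    unfolding dA_eq_density using F density by (subst integrable_density) auto
  have "integral\<^sup>L dA F = integral\<^sup>L lborel (\<lambda>p. dA_density p *\<^sub>R F p)"
    unfolding dA_eq_density using F density by (intro integral_density) auto
  also have "\<dots> = (LINT p:S|lborel. H p)"
    by (simp add: density_eq set_lebesgue_integral_def)
  also have "\<dots> = (LINT p:K|lborel. H p)"
    using \<open>set_integrable lborel K H\<close> S_integrable AE_in_cbox_iff_in_strip[OF \<open>1 \<le> a\<close>, of b]
    by (intro set_integral_cong_set) (auto simp: set_integrable_def set_borel_measurable_def K_def S_def)
  also have "\<dots> = integral K H"
    by (rule set_borel_integral_eq_integral(2)) fact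
  finally show "integral\<^sup>L dA F = integral (cbox (a, 0) (b, 2 * pi)) H"
    by (simp add: K_def)
qed

lemma L2_cbox:
  fixes f :: cfun and H :: "real \<times> real \<Rightarrow> real"
  assumes "1 \<le> a" "a \<le> b" "f \<in> borel_measurable borel"
    and "continuous_on (cbox (a, 0) (b, 2 * pi)) H"
    and "\<And>x y. 1 < x \<Longrightarrow> a \<le> x \<Longrightarrow> x \<le> b \<Longrightarrow> (cmod (f (x, y)))\<^sup>2 = x * H (x, y)"
    and "\<And>x y. 1 < x \<Longrightarrow> \<not> (a \<le> x \<and> x \<le> b) \<Longrightarrow> f (x, y) = 0"
  shows "L2 f"
  unfolding L2_def
proof
  show "f \<in> borel_measurable dA"
    using assms(3) by (simp add: measurable_cong_sets[OF sets_dA refl])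
  show "integrable dA (\<lambda>p. (cmod (f p))\<^sup>2)"
    using assms by (intro integrable_dA_cbox[where H = H]) auto
qed

lemma L2_if_continuous_compact_support:
  fixes f :: cfun
  assumes "1 < a" "a \<le> b" "f \<in> borel_measurable borel" "continuous_on {p. 1 < fst p} f"
    and "\<And>x y. x < a \<or> b < x \<Longrightarrow> f (x, y) = 0"
  shows "L2 f"
proof (rule L2_cbox[where H = "\<lambda>p. (cmod (f p))\<^sup>2 / fst p"])
  have "cbox (a, 0) (b, 2 * pi) \<subseteq> {p. 1 < fst p}"
    using \<open>1 < a\<close> by (auto simp: cbox_Pair_eq)
  with assms(4) show "continuous_on (cbox (a, 0) (b, 2 * pi)) (\<lambda>p. (cmod (f p))\<^sup>2 / fst p)"
    by (auto intro!: continuous_intros elim: continuous_on_subset)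
qed (use assms in auto)

definition radial :: "(real \<Rightarrow> real) \<Rightarrow> cfun" where
  "radial U = (\<lambda>p. complex_of_real (U (fst p)))"

lemma borel_measurable_radial:
  "U \<in> borel_measurable borel \<Longrightarrow> radial U \<in> borel_measurable borel"
  unfolding radial_def
  by (intro borel_measurable_continuous_on[OF continuous_on_of_real[OF continuous_on_id]]
      measurable_compose[OF borel_measurable_continuous_onI[OF continuous_on_fst[OF continuous_on_id]]])

lemma continuous_on_extension_at_left:
  fixes g :: "real \<Rightarrow> real"
  assumes "continuous_on {a<..} g" "(g \<longlongrightarrow> l) (at_right a)" "a < b"
  shows "continuous_on {a..b} (\<lambda>x. if x = a then l else g x)"
proof (rule continuous_on_IccI)
  let ?h = "\<lambda>x. if x = a then l else g x"
  have "eventually (\<lambda>x. g x = ?h x) (at_right a)"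
    by (simp add: eventually_at_filter)
  with assms(2) show "(?h \<longlongrightarrow> ?h a) (at_right a)"
    by (simp add: tendsto_cong)
  have "isCont ?h x" if "a < x" for x
  proof -
    have "isCont g x"
      using assms(1) that by (simp add: continuous_on_eq_continuous_at)
    moreover have "eventually (\<lambda>t. t \<in> {a<..}) (nhds x)"
      using that by (intro eventually_nhds_in_open) auto
    then have "eventually (\<lambda>t. g t = ?h t) (nhds x)"
      by eventually_elim auto
    ultimately show ?thesis
      using that isCont_cong by fastforce
  qed
  then show "(?h \<longlongrightarrow> ?h b) (at_left b)" "\<And>x. a < x \<Longrightarrow> x < b \<Longrightarrow> (?h \<longlongrightarrow> ?h x) (at x)"
    using \<open>a < b\<close> by (auto simp: isCont_def filterlim_at_split)
qed fact

lemma L2_radial: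
  assumes "U \<in> borel_measurable borel" "continuous_on {1<..} U" "(U \<longlongrightarrow> l) (at_right 1)"
    and "\<And>x. 2 \<le> x \<Longrightarrow> U x = 0"
  shows "L2 (radial U)"
proof -
  define h where "h x = (if x = 1 then l\<^sup>2 else (U x)\<^sup>2 / x)" for x
  have "continuous_on {1..2} h"
    unfolding h_def using assms(2,3)
    by (intro continuous_on_extension_at_left[where l = "l\<^sup>2", simplified] continuous_intros tendsto_eq_intros)
      auto
  then have "continuous_on (cbox (1, 0) (2, 2 * pi)) (\<lambda>p. h (fst p))"
    by (rule continuous_on_compose2) (auto intro!: continuous_intros simp: cbox_Pair_eq)
  then show ?thesis
    using assms borel_measurable_radial[OF assms(1)]
    by (intro L2_cbox[where a = 1 and b = 2 and H = "\<lambda>p. h (fst p)"]) (auto simp: radial_def h_def)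
qed

lemma integral_dA_radial:
  fixes G h :: "real \<Rightarrow> real"
  assumes "G \<in> borel_measurable borel" "continuous_on {1..2} h"
    and "\<And>x. 1 < x \<Longrightarrow> x \<le> 2 \<Longrightarrow> G x = x * h x" "\<And>x. 2 < x \<Longrightarrow> G x = 0"
  shows "integral\<^sup>L dA (radial G) = complex_of_real (2 * pi * integral {1..2} h)"
proof -
  have h: "continuous_on (cbox (1, 0) (2, 2 * pi)) (\<lambda>p. complex_of_real (h (fst p)))"
    using assms(2) by (intro continuous_on_of_real continuous_on_compose2[OF assms(2)])
      (auto intro!: continuous_intros simp: cbox_Pair_eq)
  have "integral\<^sup>L dA (radial G) = integral (cbox (1, 0) (2, 2 * pi)) (\<lambda>p. complex_of_real (h (fst p)))"
    using assms borel_measurable_radial[OF assms(1)]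
    by (intro integral_dA_cbox h) (auto simp: radial_def scaleR_conv_of_real)
  also have "\<dots> = integral {1..2} (\<lambda>x. complex_of_real (2 * pi * h x))"
    using integral_prod_continuous[OF h] by (simp add: scaleR_conv_of_real mult_ac)
  also have "\<dots> = complex_of_real (2 * pi * integral {1..2} h)"
    using integrable_continuous_real[OF assms(2)]
    by (intro integral_unique has_integral_of_real has_integral_mult_right) auto
  finally show ?thesis .
qed

lemma continuous_on_mult_radial_over_x:
  fixes f :: cfun and U :: "real \<Rightarrow> real"
  assumes "continuous_on {p. 1 < fst p} f" "continuous_on {1<..} U"
  shows "continuous_on {p. 1 < fst p} (\<lambda>p. f p * complex_of_real (U (fst p) / fst p))"
proof -
  have "continuous_on {p. 1 < fst p} (\<lambda>p. U (fst p))"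
    by (rule continuous_on_compose2[OF assms(2) continuous_on_fst[OF continuous_on_id]]) auto
  then have "continuous_on {p. 1 < fst p} (\<lambda>p. U (fst p) / fst p)"
    by (intro continuous_intros) auto
  with assms(1) show ?thesis
    by (intro continuous_on_mult continuous_on_of_real)
qed

lemma
  fixes f :: cfun and U :: "real \<Rightarrow> real"
  assumes "1 < a" "a \<le> b" "f \<in> borel_measurable borel" "continuous_on {p. 1 < fst p} f"
    and "\<And>x y. x < a \<or> b < x \<Longrightarrow> f (x, y) = 0"
    and "U \<in> borel_measurable borel" "continuous_on {1<..} U"
  shows integrable_on_cbox_mult_radial:
      "(\<lambda>p. f p * complex_of_real (U (fst p) / fst p)) integrable_on cbox (a, 0) (b, 2 * pi)"
    and L2_inner_radial_eq_integral_cbox: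
      "L2_inner f (radial U) = integral (cbox (a, 0) (b, 2 * pi)) (\<lambda>p. f p * complex_of_real (U (fst p) / fst p))"
proof -
  have "cbox (a, 0) (b, 2 * pi) \<subseteq> {p. 1 < fst p}"
    using \<open>1 < a\<close> by (auto simp: cbox_Pair_eq)
  then have continuous: "continuous_on (cbox (a, 0) (b, 2 * pi)) (\<lambda>p. f p * complex_of_real (U (fst p) / fst p))"
    using continuous_on_mult_radial_over_x[OF assms(4,7)] by (rule continuous_on_subset[rotated])
  then show "(\<lambda>p. f p * complex_of_real (U (fst p) / fst p)) integrable_on cbox (a, 0) (b, 2 * pi)"
    by (rule integrable_continuous)
  show "L2_inner f (radial U) = integral (cbox (a, 0) (b, 2 * pi)) (\<lambda>p. f p * complex_of_real (U (fst p) / fst p))"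
    unfolding L2_inner_def
  proof (rule integral_dA_cbox)
    show "continuous_on (cbox (a, 0) (b, 2 * pi)) (\<lambda>p. f p * complex_of_real (U (fst p) / fst p))"
      by (fact continuous)
  qed (use assms borel_measurable_radial[OF assms(6)] in \<open>auto simp: radial_def scaleR_conv_of_real\<close>)
qed

lemma has_integral_cbox_0_if_x_slices:
  fixes f :: "real \<times> real \<Rightarrow> 'a::banach"
  assumes "continuous_on (cbox (a, c) (b, d)) f" "\<And>y. y \<in> {c..d} \<Longrightarrow> integral {a..b} (\<lambda>x. f (x, y)) = 0"
  shows "(f has_integral 0) (cbox (a, c) (b, d))"
proof -
  have "integral (cbox (a, c) (b, d)) f = integral {a..b} (\<lambda>x. integral {c..d} (\<lambda>y. f (x, y)))"
    using integral_prod_continuous[OF assms(1)] by simp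
  also have "\<dots> = integral {c..d} (\<lambda>y. integral {a..b} (\<lambda>x. f (x, y)))"
    using integral_swap_continuous[of a c b d "\<lambda>x y. f (x, y)"] assms(1) by simp
  also have "\<dots> = integral {c..d} (\<lambda>y. 0)"
    using assms(2) by (rule integral_cong)
  finally show ?thesis
    using integrable_continuous[OF assms(1)] by (simp add: has_integral_integral)
qed

lemma has_integral_cbox_0_if_y_slices:
  fixes f :: "real \<times> real \<Rightarrow> 'a::banach"
  assumes "continuous_on (cbox (a, c) (b, d)) f" "\<And>x. x \<in> {a..b} \<Longrightarrow> integral {c..d} (\<lambda>y. f (x, y)) = 0"
  shows "(f has_integral 0) (cbox (a, c) (b, d))"
proof -
  have "integral (cbox (a, c) (b, d)) f = integral {a..b} (\<lambda>x. integral {c..d} (\<lambda>y. f (x, y)))"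
    using integral_prod_continuous[OF assms(1)] by simp
  also have "\<dots> = integral {a..b} (\<lambda>x. 0)"
    using assms(2) by (rule integral_cong)
  finally show ?thesis
    using integrable_continuous[OF assms(1)] by (simp add: has_integral_integral)
qed

lemma continuous_on_slices:
  assumes "continuous_on UNIV g"
  shows "continuous_on S (\<lambda>t. g (t, y))" "continuous_on S (\<lambda>t. g (x, t))"
  by (rule continuous_on_compose2[OF assms]; auto intro!: continuous_intros)+

section \<open>Test functions\<close>

lemma smooth2_iter_partials:
  assumes "smooth2 f" "g \<in> iter_partials n f"
  shows "continuous_on UNIV g"
    and "((\<lambda>t. g (t, y)) has_vector_derivative pdx g (x, y)) (at x)"
    and "((\<lambda>t. g (x, t)) has_vector_derivative pdy g (x, y)) (at y)"
  using assms unfolding smooth2_def pdx_def pdy_def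
  by (auto simp: vector_derivative_works[symmetric])

lemma partials_in_iter_partials:
  "f \<in> iter_partials 0 f" "pdx f \<in> iter_partials 1 f" "pdy f \<in> iter_partials 1 f"
  "pdx (pdx f) \<in> iter_partials 2 f" "pdy (pdy f) \<in> iter_partials 2 f"
  by (auto simp: numeral_2_eq_2)

lemma has_vector_derivative_eq_0_if_locally_0:
  assumes "(f has_vector_derivative D) (at x)" "open S" "x \<in> S" "\<And>t. t \<in> S \<Longrightarrow> f t = 0"
  shows "D = 0"
proof -
  have "((\<lambda>t. 0) has_vector_derivative D) (at x)"
    using assms by (intro has_vector_derivative_transform_within_open[OF assms(1)]) auto
  then show ?thesis
    using vector_derivative_unique_at has_vector_derivative_const by blast
qed

definition potential :: "real \<Rightarrow> real" where
  "potential x = (x ^ 4 + 1)\<^sup>2 / (4 * x\<^sup>2 * (x ^ 4 - 1))"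

lemma Delta_ex_eq:
  "Delta_ex \<phi> p = pdx (pdx \<phi>) p + of_real ((fst p)\<^sup>2) * pdy (pdy \<phi>) p
     - of_real (1 / fst p) * pdx \<phi> p + of_real (potential (fst p)) * \<phi> p"
  by (cases p) (simp add: Delta_ex_def potential_def)

lemma continuous_on_potential: "continuous_on {1<..} potential"
proof -
  have "x ^ 4 \<noteq> 1" if "1 < x" for x :: real
    using one_less_power[OF that, of 4] by simp
  then show ?thesis
    unfolding potential_def by (intro continuous_intros) auto
qed

locale test_function =
  fixes \<phi> :: cfun
  assumes test_function: "\<phi> \<in> test_functions"
begin

lemma smooth: "smooth2 \<phi>"
  using test_function by (simp add: test_functions_def)

lemma periodic: "\<phi> (x, y + 2 * pi) = \<phi> (x, y)"
  using test_function by (simp add: test_functions_def)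

lemma continuous_partials:
  "continuous_on UNIV \<phi>" "continuous_on UNIV (pdx \<phi>)"
  "continuous_on UNIV (pdx (pdx \<phi>))" "continuous_on UNIV (pdy (pdy \<phi>))"
  using smooth2_iter_partials(1)[OF smooth partials_in_iter_partials(1)]
    smooth2_iter_partials(1)[OF smooth partials_in_iter_partials(2)]
    smooth2_iter_partials(1)[OF smooth partials_in_iter_partials(4)]
    smooth2_iter_partials(1)[OF smooth partials_in_iter_partials(5)] .

lemma has_vector_derivative_partials:
  "((\<lambda>t. \<phi> (t, y)) has_vector_derivative pdx \<phi> (x, y)) (at x)"
  "((\<lambda>t. pdx \<phi> (t, y)) has_vector_derivative pdx (pdx \<phi>) (x, y)) (at x)"
  "((\<lambda>t. \<phi> (x, t)) has_vector_derivative pdy \<phi> (x, y)) (at y)"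
  "((\<lambda>t. pdy \<phi> (x, t)) has_vector_derivative pdy (pdy \<phi>) (x, y)) (at y)"
  using smooth2_iter_partials(2)[OF smooth partials_in_iter_partials(1)]
    smooth2_iter_partials(2)[OF smooth partials_in_iter_partials(2)]
    smooth2_iter_partials(3)[OF smooth partials_in_iter_partials(1)]
    smooth2_iter_partials(3)[OF smooth partials_in_iter_partials(3)] .

lemma pdy_periodic: "pdy \<phi> (x, y + 2 * pi) = pdy \<phi> (x, y)"
proof -
  let ?h = "\<lambda>t. \<phi> (x, t)"
  have "((?h \<circ> (\<lambda>t. t + 2 * pi)) has_vector_derivative (1 *\<^sub>R pdy \<phi> (x, y + 2 * pi))) (at y)"
    by (rule vector_diff_chain_at) (auto intro!: derivative_eq_intros has_vector_derivative_partials(3))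
  moreover have "?h \<circ> (\<lambda>t. t + 2 * pi) = ?h"
    using periodic by (auto simp: o_def)
  ultimately show ?thesis
    using has_vector_derivative_partials(3)[of x y] by (auto intro: vector_derivative_unique_at)
qed

lemma integral_pdy_pdy: "integral {0..2 * pi} (\<lambda>y. pdy (pdy \<phi>) (x, y)) = 0"
proof -
  have "((\<lambda>y. pdy (pdy \<phi>) (x, y)) has_integral (pdy \<phi> (x, 2 * pi) - pdy \<phi> (x, 0))) {0..2 * pi}"
    by (intro fundamental_theorem_of_calculus)
      (auto intro: has_vector_derivative_at_within has_vector_derivative_partials(4))
  then show ?thesis
    using pdy_periodic[of x 0] by (simp add: integral_unique)
qed

lemma has_integral_cbox_pdy_pdy:
  assumes "continuous_on {a..b} V"
  shows "((\<lambda>p. V (fst p) *\<^sub>R pdy (pdy \<phi>) p) has_integral 0) (cbox (a, 0) (b, 2 * pi))"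
proof (rule has_integral_cbox_0_if_y_slices)
  have "continuous_on (cbox (a, 0) (b, 2 * pi)) (\<lambda>p. V (fst p))"
    by (rule continuous_on_compose2[OF assms continuous_on_fst[OF continuous_on_id]]) (auto simp: cbox_Pair_eq)
  then show "continuous_on (cbox (a, 0) (b, 2 * pi)) (\<lambda>p. V (fst p) *\<^sub>R pdy (pdy \<phi>) p)"
    using continuous_partials(4) by (auto intro!: continuous_intros elim: continuous_on_subset)
  show "integral {0..2 * pi} (\<lambda>y. V (fst (x, y)) *\<^sub>R pdy (pdy \<phi>) (x, y)) = 0" for x
    using integral_pdy_pdy[of x] by simp
qed

lemma borel_measurable_partials:
  "\<phi> \<in> borel_measurable borel" "Delta_ex \<phi> \<in> borel_measurable borel"
proof -
  have partials: "\<phi> \<in> borel_measurable borel" "pdx \<phi> \<in> borel_measurable borel"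
    "pdx (pdx \<phi>) \<in> borel_measurable borel" "pdy (pdy \<phi>) \<in> borel_measurable borel"
    using continuous_partials by (auto intro: borel_measurable_continuous_onI)
  have "radial (\<lambda>x. x\<^sup>2) \<in> borel_measurable borel" "radial (\<lambda>x. 1 / x) \<in> borel_measurable borel"
    "radial potential \<in> borel_measurable borel"
    unfolding potential_def by (intro borel_measurable_radial; measurable)+
  with partials show "\<phi> \<in> borel_measurable borel" "Delta_ex \<phi> \<in> borel_measurable borel"
    unfolding Delta_ex_eq[abs_def] radial_def by measurable
qed

lemma continuous_on_Delta_ex: "continuous_on {p. 1 < fst p} (Delta_ex \<phi>)"
proof -
  have "continuous_on {p. 1 < fst p} (\<lambda>p. potential (fst p))"
    by (rule continuous_on_compose2[OF continuous_on_potential continuous_on_fst[OF continuous_on_id]])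
      auto
  then show ?thesis
    unfolding Delta_ex_eq[abs_def] using continuous_partials
    by (auto intro!: continuous_intros elim: continuous_on_subset)
qed

lemma support_bounds:
  obtains a b where "1 < a" "a < b"
    and "\<And>x y. x \<le> a \<or> b \<le> x \<Longrightarrow> \<phi> (x, y) = 0 \<and> pdx \<phi> (x, y) = 0 \<and> Delta_ex \<phi> (x, y) = 0"
proof -
  obtain a0 b0 where "1 < a0" and zero: "\<And>x y. x \<le> a0 \<or> b0 \<le> x \<Longrightarrow> \<phi> (x, y) = 0"
    using test_function unfolding test_functions_def by blast
  (* Shrinking the support interval gives each point outside it an open neighbourhood on which
     phi vanishes, so that its x-derivatives vanish there too. *)
  define a where "a = (1 + a0) / 2"
  define b where "b = max b0 a0 + 1"
  have "\<phi> (x, y) = 0 \<and> pdx \<phi> (x, y) = 0 \<and> Delta_ex \<phi> (x, y) = 0" if "x \<le> a \<or> b \<le> x" for x y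
  proof -
    define S where "S = (if x \<le> a then {..<a0} else {b0<..})"
    have S: "open S" "x \<in> S" and zero_S: "\<And>t y. t \<in> S \<Longrightarrow> \<phi> (t, y) = 0"
      using that \<open>1 < a0\<close> zero by (auto simp: S_def a_def b_def split: if_splits)
    have pdx_zero: "pdx \<phi> (t, y) = 0" if "t \<in> S" for t y
      using has_vector_derivative_partials(1) S(1) that zero_S
      by (rule has_vector_derivative_eq_0_if_locally_0)
    have "pdx (pdx \<phi>) (x, y) = 0"
      using has_vector_derivative_partials(2) S pdx_zero
      by (rule has_vector_derivative_eq_0_if_locally_0)
    moreover have "(\<lambda>t. \<phi> (x, t)) = (\<lambda>t. 0)" "(\<lambda>t. pdy \<phi> (x, t)) = (\<lambda>t. 0)"
      using zero_S[OF S(2)] by (auto simp: pdy_def)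
    then have "pdy (pdy \<phi>) (x, y) = 0"
      by (simp add: pdy_def)
    ultimately show ?thesis
      using zero_S[OF S(2)] pdx_zero[OF S(2)] by (simp add: Delta_ex_eq)
  qed
  moreover have "1 < a" "a < b"
    using \<open>1 < a0\<close> by (auto simp: a_def b_def)
  ultimately show ?thesis
    using that by blast
qed

lemma L2: "L2 \<phi>" "L2 (Delta_ex \<phi>)"
proof -
  obtain a b where "1 < a" "a < b"
    and zero: "\<And>x y. x \<le> a \<or> b \<le> x \<Longrightarrow> \<phi> (x, y) = 0 \<and> pdx \<phi> (x, y) = 0 \<and> Delta_ex \<phi> (x, y) = 0"
    using support_bounds by blast
  show "L2 \<phi>"
    using \<open>1 < a\<close> \<open>a < b\<close> zero borel_measurable_partials(1) continuous_partials(1)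
    by (intro L2_if_continuous_compact_support[of a b]) (auto elim: continuous_on_subset)
  show "L2 (Delta_ex \<phi>)"
    using \<open>1 < a\<close> \<open>a < b\<close> zero borel_measurable_partials(2) continuous_on_Delta_ex
    by (intro L2_if_continuous_compact_support[of a b]) auto
qed

end

lemma Delta_ex_graph_L2: "(f, g) \<in> Delta_ex_graph \<Longrightarrow> L2 f \<and> L2 g"
  unfolding Delta_ex_graph_def using test_function.L2 test_function.intro by blast

section \<open>Radial functions\<close>

(* Delta_ex applied to radial U, where U' and U'' stand for the derivatives of U. *)
definition radial_Delta_ex :: "(real \<Rightarrow> real) \<Rightarrow> (real \<Rightarrow> real) \<Rightarrow> (real \<Rightarrow> real) \<Rightarrow> real \<Rightarrow> real" where
  "radial_Delta_ex U U' U'' x = U'' x - U' x / x + potential x * U x"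

(* The Lagrange identity behind Green's formula: the derivative is (g L f - f L g) / x for
   L = radial_Delta_ex, the potential terms cancelling. *)
lemma has_vector_derivative_wronskian_over_x:
  fixes f f' f'' :: "real \<Rightarrow> 'a::real_normed_vector" and g g' g'' :: "real \<Rightarrow> real"
  assumes "(f has_vector_derivative f' x) (at x)" "(f' has_vector_derivative f'' x) (at x)"
    and "(g has_real_derivative g' x) (at x)" "(g' has_real_derivative g'' x) (at x)" "x \<noteq> 0"
  shows "((\<lambda>t. (g t / t) *\<^sub>R f' t - (g' t / t) *\<^sub>R f t) has_vector_derivative
           (g x / x) *\<^sub>R f'' x - (g'' x / x) *\<^sub>R f x - (g x / x\<^sup>2) *\<^sub>R f' x + (g' x / x\<^sup>2) *\<^sub>R f x) (at x)"
proof -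
  have "((\<lambda>t. g t / t) has_real_derivative g' x / x - g x / x\<^sup>2) (at x)"
    by (rule DERIV_cong[OF DERIV_divide[OF assms(3) DERIV_ident assms(5)]])
      (use \<open>x \<noteq> 0\<close> in \<open>simp add: field_simps power2_eq_square\<close>)
  moreover have "((\<lambda>t. g' t / t) has_real_derivative g'' x / x - g' x / x\<^sup>2) (at x)"
    by (rule DERIV_cong[OF DERIV_divide[OF assms(4) DERIV_ident assms(5)]])
      (use \<open>x \<noteq> 0\<close> in \<open>simp add: field_simps power2_eq_square\<close>)
  ultimately have "((\<lambda>t. (g t / t) *\<^sub>R f' t - (g' t / t) *\<^sub>R f t) has_vector_derivative
      ((g x / x) *\<^sub>R f'' x + (g' x / x - g x / x\<^sup>2) *\<^sub>R f' x)
      - ((g' x / x) *\<^sub>R f' x + (g'' x / x - g' x / x\<^sup>2) *\<^sub>R f x)) (at x)"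
    using assms(1,2) by (intro has_vector_derivative_diff has_vector_derivative_scaleR)
  then show ?thesis
    by (rule has_vector_derivative_eq_rhs) (simp add: scaleR_diff_left algebra_simps)
qed

lemma Delta_ex_mult_radial_eq:
  assumes "x \<noteq> 0"
  shows "Delta_ex \<phi> (x, y) * complex_of_real (U x / x) - \<phi> (x, y) * complex_of_real (radial_Delta_ex U U' U'' x / x)
    = (U x / x) *\<^sub>R pdx (pdx \<phi>) (x, y) - (U'' x / x) *\<^sub>R \<phi> (x, y) - (U x / x\<^sup>2) *\<^sub>R pdx \<phi> (x, y)
      + (U' x / x\<^sup>2) *\<^sub>R \<phi> (x, y) + (x * U x) *\<^sub>R pdy (pdy \<phi>) (x, y)"
  using assms
  by (simp add: Delta_ex_eq radial_Delta_ex_def scaleR_conv_of_real field_simps power2_eq_square)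

locale C2_profile =
  fixes S :: "real set" and U U' U'' :: "real \<Rightarrow> real"
  assumes finite_exceptions: "finite S"
    and profile_measurable: "U \<in> borel_measurable borel" "U' \<in> borel_measurable borel"
      "U'' \<in> borel_measurable borel"
    and profile_continuous: "continuous_on {1<..} U" "continuous_on {1<..} U'" "continuous_on {1<..} U''"
    and profile_derivatives: "\<And>x. 1 < x \<Longrightarrow> x \<notin> S \<Longrightarrow> (U has_real_derivative U' x) (at x)"
      "\<And>x. 1 < x \<Longrightarrow> x \<notin> S \<Longrightarrow> (U' has_real_derivative U'' x) (at x)"
begin

lemma borel_measurable_radial_Delta_ex: "radial_Delta_ex U U' U'' \<in> borel_measurable borel"
  using profile_measurable unfolding radial_Delta_ex_def[abs_def] potential_def by measurable

lemma continuous_on_radial_Delta_ex: "continuous_on {1<..} (radial_Delta_ex U U' U'')"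
  unfolding radial_Delta_ex_def[abs_def]
  using profile_continuous continuous_on_potential by (intro continuous_intros) auto

lemma integral_wronskian_derivative_eq_0:
  assumes "test_function \<phi>" "1 < a" "a \<le> b"
    and "\<phi> (a, y) = 0" "pdx \<phi> (a, y) = 0" "\<phi> (b, y) = 0" "pdx \<phi> (b, y) = 0"
  shows "integral {a..b} (\<lambda>x. (U x / x) *\<^sub>R pdx (pdx \<phi>) (x, y) - (U'' x / x) *\<^sub>R \<phi> (x, y)
      - (U x / x\<^sup>2) *\<^sub>R pdx \<phi> (x, y) + (U' x / x\<^sup>2) *\<^sub>R \<phi> (x, y)) = 0"
proof -
  interpret test_function \<phi> by fact
  define P where "P t = (U t / t) *\<^sub>R pdx \<phi> (t, y) - (U' t / t) *\<^sub>R \<phi> (t, y)" for t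
  have "((\<lambda>x. (U x / x) *\<^sub>R pdx (pdx \<phi>) (x, y) - (U'' x / x) *\<^sub>R \<phi> (x, y)
      - (U x / x\<^sup>2) *\<^sub>R pdx \<phi> (x, y) + (U' x / x\<^sup>2) *\<^sub>R \<phi> (x, y)) has_integral (P b - P a)) {a..b}"
  proof (rule fundamental_theorem_of_calculus_interior_strong[OF finite_exceptions \<open>a \<le> b\<close>])
    have "{a..b} \<subseteq> {1<..}"
      using \<open>1 < a\<close> by auto
    then show "continuous_on {a..b} P"
      unfolding P_def using profile_continuous continuous_on_slices(1)[OF continuous_partials(1)]
        continuous_on_slices(1)[OF continuous_partials(2)]
      by (auto intro!: continuous_intros elim!: continuous_on_subset)
    show "(P has_vector_derivative (U x / x) *\<^sub>R pdx (pdx \<phi>) (x, y) - (U'' x / x) *\<^sub>R \<phi> (x, y)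
      - (U x / x\<^sup>2) *\<^sub>R pdx \<phi> (x, y) + (U' x / x\<^sup>2) *\<^sub>R \<phi> (x, y)) (at x)" if "x \<in> {a<..<b} - S" for x
      unfolding P_def using that \<open>1 < a\<close>
      by (intro has_vector_derivative_wronskian_over_x has_vector_derivative_partials profile_derivatives) auto
  qed
  then show ?thesis
    using assms by (simp add: P_def integral_unique)
qed

lemma has_integral_cbox_wronskian_derivative:
  assumes "test_function \<phi>" "1 < a" "a \<le> b"
    and "\<And>y. \<phi> (a, y) = 0 \<and> pdx \<phi> (a, y) = 0 \<and> \<phi> (b, y) = 0 \<and> pdx \<phi> (b, y) = 0"
  shows "((\<lambda>p. (U (fst p) / fst p) *\<^sub>R pdx (pdx \<phi>) p - (U'' (fst p) / fst p) *\<^sub>R \<phi> p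
      - (U (fst p) / (fst p)\<^sup>2) *\<^sub>R pdx \<phi> p + (U' (fst p) / (fst p)\<^sup>2) *\<^sub>R \<phi> p) has_integral 0)
      (cbox (a, 0) (b, 2 * pi))"
proof (rule has_integral_cbox_0_if_x_slices)
  interpret test_function \<phi> by fact
  define K where "K = cbox (a, 0) (b, 2 * pi)"
  have K: "K \<subseteq> {p. 1 < fst p}"
    using \<open>1 < a\<close> by (auto simp: K_def cbox_Pair_eq)
  have profile_fst: "continuous_on K (\<lambda>p. V (fst p))" if "continuous_on {1<..} V" for V
    using K by (intro continuous_on_compose2[OF that continuous_on_fst[OF continuous_on_id]]) auto
  have "continuous_on K fst" "\<forall>p\<in>K. fst p \<noteq> 0"
    using K by (auto intro: continuous_intros)
  then have "continuous_on K (\<lambda>p. (U (fst p) / fst p) *\<^sub>R pdx (pdx \<phi>) p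
      - (U'' (fst p) / fst p) *\<^sub>R \<phi> p - (U (fst p) / (fst p)\<^sup>2) *\<^sub>R pdx \<phi> p + (U' (fst p) / (fst p)\<^sup>2) *\<^sub>R \<phi> p)"
    using profile_fst[OF profile_continuous(1)] profile_fst[OF profile_continuous(2)]
      profile_fst[OF profile_continuous(3)] continuous_partials
    by (auto intro!: continuous_intros elim: continuous_on_subset)
  then show "continuous_on (cbox (a, 0) (b, 2 * pi)) (\<lambda>p. (U (fst p) / fst p) *\<^sub>R pdx (pdx \<phi>) p
      - (U'' (fst p) / fst p) *\<^sub>R \<phi> p - (U (fst p) / (fst p)\<^sup>2) *\<^sub>R pdx \<phi> p + (U' (fst p) / (fst p)\<^sup>2) *\<^sub>R \<phi> p)"
    by (simp add: K_def)
  show "integral {a..b} (\<lambda>x. (U (fst (x, y)) / fst (x, y)) *\<^sub>R pdx (pdx \<phi>) (x, y)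
      - (U'' (fst (x, y)) / fst (x, y)) *\<^sub>R \<phi> (x, y) - (U (fst (x, y)) / (fst (x, y))\<^sup>2) *\<^sub>R pdx \<phi> (x, y)
      + (U' (fst (x, y)) / (fst (x, y))\<^sup>2) *\<^sub>R \<phi> (x, y)) = 0" for y
    using integral_wronskian_derivative_eq_0[OF assms(1-3)] assms(4) by simp
qed

lemma has_integral_cbox_Green_integrand:
  assumes "test_function \<phi>" "1 < a" "a \<le> b"
    and zero: "\<And>y. \<phi> (a, y) = 0 \<and> pdx \<phi> (a, y) = 0 \<and> \<phi> (b, y) = 0 \<and> pdx \<phi> (b, y) = 0"
  shows "((\<lambda>p. Delta_ex \<phi> p * of_real (U (fst p) / fst p)
      - \<phi> p * of_real (radial_Delta_ex U U' U'' (fst p) / fst p)) has_integral 0) (cbox (a, 0) (b, 2 * pi))"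
proof -
  interpret test_function \<phi> by fact
  have "continuous_on {a..b} (\<lambda>x. x * U x)"
    using \<open>1 < a\<close> profile_continuous(1) by (auto intro!: continuous_intros elim: continuous_on_subset)
  then have sum: "((\<lambda>p. ((U (fst p) / fst p) *\<^sub>R pdx (pdx \<phi>) p - (U'' (fst p) / fst p) *\<^sub>R \<phi> p
      - (U (fst p) / (fst p)\<^sup>2) *\<^sub>R pdx \<phi> p + (U' (fst p) / (fst p)\<^sup>2) *\<^sub>R \<phi> p)
      + (fst p * U (fst p)) *\<^sub>R pdy (pdy \<phi>) p) has_integral 0 + 0) (cbox (a, 0) (b, 2 * pi))"
    using assms by (intro has_integral_add has_integral_cbox_pdy_pdy has_integral_cbox_wronskian_derivative)
  have eq: "Delta_ex \<phi> p * of_real (U (fst p) / fst p) - \<phi> p * of_real (radial_Delta_ex U U' U'' (fst p) / fst p)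
      = (U (fst p) / fst p) *\<^sub>R pdx (pdx \<phi>) p - (U'' (fst p) / fst p) *\<^sub>R \<phi> p
      - (U (fst p) / (fst p)\<^sup>2) *\<^sub>R pdx \<phi> p + (U' (fst p) / (fst p)\<^sup>2) *\<^sub>R \<phi> p
      + (fst p * U (fst p)) *\<^sub>R pdy (pdy \<phi>) p" if "p \<in> cbox (a, 0) (b, 2 * pi)" for p
    using that \<open>1 < a\<close>
      Delta_ex_mult_radial_eq[where x = "fst p" and y = "snd p" and \<phi> = \<phi> and U = U and U' = U' and U'' = U'']
    by (auto simp: cbox_Pair_eq)
  show ?thesis
    using has_integral_cong[THEN iffD2, OF eq sum] by simp
qed

theorem L2_inner_Delta_ex_radial:
  assumes "\<phi> \<in> test_functions"
  shows "L2_inner (Delta_ex \<phi>) (radial U) = L2_inner \<phi> (radial (radial_Delta_ex U U' U''))"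
proof -
  interpret test_function \<phi> by (rule test_function.intro) fact
  obtain a b where "1 < a" "a < b"
    and zero: "\<And>x y. x \<le> a \<or> b \<le> x \<Longrightarrow> \<phi> (x, y) = 0 \<and> pdx \<phi> (x, y) = 0 \<and> Delta_ex \<phi> (x, y) = 0"
    using support_bounds by blast
  define K where "K = cbox (a, 0) (b, 2 * pi)"
  define H1 where "H1 = (\<lambda>p. Delta_ex \<phi> p * of_real (U (fst p) / fst p))"
  define H2 where "H2 = (\<lambda>p. \<phi> p * of_real (radial_Delta_ex U U' U'' (fst p) / fst p))"
  have outside: "\<phi> (x, y) = 0" "Delta_ex \<phi> (x, y) = 0" if "x < a \<or> b < x" for x y
    using zero that by auto
  note radial_cbox = integrable_on_cbox_mult_radial L2_inner_radial_eq_integral_cbox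
  have H1: "H1 integrable_on K" "L2_inner (Delta_ex \<phi>) (radial U) = integral K H1"
    unfolding K_def H1_def
    using radial_cbox[OF \<open>1 < a\<close> less_imp_le[OF \<open>a < b\<close>] borel_measurable_partials(2)
        continuous_on_Delta_ex outside(2) profile_measurable(1) profile_continuous(1)] by auto
  have H2: "H2 integrable_on K" "L2_inner \<phi> (radial (radial_Delta_ex U U' U'')) = integral K H2"
    unfolding K_def H2_def
    using radial_cbox[OF \<open>1 < a\<close> less_imp_le[OF \<open>a < b\<close>] borel_measurable_partials(1)
        continuous_on_subset[OF continuous_partials(1) subset_UNIV] outside(1)
        borel_measurable_radial_Delta_ex continuous_on_radial_Delta_ex] by auto
  have "((\<lambda>p. H1 p - H2 p) has_integral 0) K"
    unfolding K_def H1_def H2_def using zero \<open>1 < a\<close> \<open>a < b\<close>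
    by (intro has_integral_cbox_Green_integrand test_function_axioms) auto
  then have "integral K H1 - integral K H2 = 0"
    using integral_diff[OF H1(1) H2(1)] by (simp add: integral_unique)
  with H1(2) H2(2) show ?thesis
    by simp
qed

end

locale admissible_profile = C2_profile +
  assumes vanishes_beyond_2: "\<And>x. 2 \<le> x \<Longrightarrow> U x = 0 \<and> U' x = 0 \<and> U'' x = 0"
    and limits_at_1: "\<exists>l. (U \<longlongrightarrow> l) (at_right 1)" "\<exists>l. (radial_Delta_ex U U' U'' \<longlongrightarrow> l) (at_right 1)"
begin

lemma radial_Delta_ex_vanishes_beyond_2: "2 \<le> x \<Longrightarrow> radial_Delta_ex U U' U'' x = 0"
  using vanishes_beyond_2 by (simp add: radial_Delta_ex_def)

lemma L2_radial_profile: "L2 (radial U)" "L2 (radial (radial_Delta_ex U U' U''))"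
  using limits_at_1 profile_measurable(1) profile_continuous(1) vanishes_beyond_2
    borel_measurable_radial_Delta_ex continuous_on_radial_Delta_ex radial_Delta_ex_vanishes_beyond_2
  by (auto intro: L2_radial)

lemma radial_in_graph_adjoint:
  "(radial U, radial (radial_Delta_ex U U' U'')) \<in> graph_adjoint Delta_ex_graph"
  using L2_radial_profile L2_inner_Delta_ex_radial
  by (auto simp: graph_adjoint_def Delta_ex_graph_def)

end

lemma has_vector_derivative_profile_wronskian:
  assumes "C2_profile S U U' U''" "C2_profile T V V' V''" "1 < x" "x \<notin> S \<union> T"
  shows "((\<lambda>t. (V t / t) *\<^sub>R U' t - (V' t / t) *\<^sub>R U t) has_vector_derivative
      (radial_Delta_ex U U' U'' x * V x - U x * radial_Delta_ex V V' V'' x) / x) (at x)"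
proof -
  interpret U: C2_profile S U U' U'' by fact
  interpret V: C2_profile T V V' V'' by fact
  have "((\<lambda>t. (V t / t) *\<^sub>R U' t - (V' t / t) *\<^sub>R U t) has_vector_derivative
      (V x / x) *\<^sub>R U'' x - (V'' x / x) *\<^sub>R U x - (V x / x\<^sup>2) *\<^sub>R U' x + (V' x / x\<^sup>2) *\<^sub>R U x) (at x)"
    using assms(3,4) U.profile_derivatives V.profile_derivatives
    by (intro has_vector_derivative_wronskian_over_x) (auto simp: has_real_derivative_iff_has_vector_derivative)
  then show ?thesis
    by (rule has_vector_derivative_eq_rhs)
      (use assms(3) in \<open>simp add: radial_Delta_ex_def field_simps power2_eq_square\<close>)
qed

lemma boundary_form_density_continuous:
  assumes "admissible_profile S U U' U''" "admissible_profile T V V' V''"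
  defines "d \<equiv> \<lambda>x. (radial_Delta_ex U U' U'' x * V x - U x * radial_Delta_ex V V' V'' x) / x"
  shows "continuous_on {1<..} d" "\<exists>l. (d \<longlongrightarrow> l) (at_right 1)"
proof -
  interpret U: admissible_profile S U U' U'' by fact
  interpret V: admissible_profile T V V' V'' by fact
  show "continuous_on {1<..} d"
    unfolding d_def using U.profile_continuous V.profile_continuous U.continuous_on_radial_Delta_ex
      V.continuous_on_radial_Delta_ex by (auto intro!: continuous_intros)
  obtain lU lV lLU lLV where "(U \<longlongrightarrow> lU) (at_right 1)" "(V \<longlongrightarrow> lV) (at_right 1)"
    "(radial_Delta_ex U U' U'' \<longlongrightarrow> lLU) (at_right 1)" "(radial_Delta_ex V V' V'' \<longlongrightarrow> lLV) (at_right 1)"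
    using U.limits_at_1 V.limits_at_1 by blast
  then have "(d \<longlongrightarrow> (lLU * lV - lU * lLV) / 1) (at_right 1)"
    unfolding d_def by (intro tendsto_intros) auto
  then show "\<exists>l. (d \<longlongrightarrow> l) (at_right 1)" ..
qed

lemma has_integral_boundary_form_density:
  assumes U: "admissible_profile S U U' U''" and V: "admissible_profile T V V' V''"
    and wronskian: "((\<lambda>x. (V x / x) * U' x - (V' x / x) * U x) \<longlongrightarrow> c) (at_right 1)"
  obtains h where "continuous_on {1..2} h"
    and "\<And>x. 1 < x \<Longrightarrow> h x = (radial_Delta_ex U U' U'' x * V x - U x * radial_Delta_ex V V' V'' x) / x"
    and "(h has_integral - c) {1..2}"
proof -
  interpret U: admissible_profile S U U' U'' by fact
  interpret V: admissible_profile T V V' V'' by fact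
  define d where "d = (\<lambda>x. (radial_Delta_ex U U' U'' x * V x - U x * radial_Delta_ex V V' V'' x) / x)"
  define w where "w = (\<lambda>x. (V x / x) *\<^sub>R U' x - (V' x / x) *\<^sub>R U x)"
  obtain l where "(d \<longlongrightarrow> l) (at_right 1)"
    using boundary_form_density_continuous(2)[OF U V] unfolding d_def by blast
  define h where "h = (\<lambda>x. if x = 1 then l else d x)"
  define w1 where "w1 = (\<lambda>x. if x = 1 then c else w x)"
  have "continuous_on {1<..} w"
    unfolding w_def using U.profile_continuous V.profile_continuous by (auto intro!: continuous_intros)
  moreover have "(w \<longlongrightarrow> c) (at_right 1)"
    using wronskian by (simp add: w_def)
  ultimately have "continuous_on {1..2} h" "continuous_on {1..2} w1"
    unfolding h_def w1_def using boundary_form_density_continuous(1)[OF U V] \<open>(d \<longlongrightarrow> l) (at_right 1)\<close>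
    by (simp_all add: continuous_on_extension_at_left d_def)
  have "(h has_integral (w1 2 - w1 1)) {1..2}"
  proof (rule fundamental_theorem_of_calculus_interior_strong)
    show "finite (S \<union> T)"
      using U.finite_exceptions V.finite_exceptions by simp
    show "(w1 has_vector_derivative h x) (at x)" if x: "x \<in> {1<..<2} - (S \<union> T)" for x
    proof -
      have "(w has_vector_derivative d x) (at x)"
        unfolding w_def d_def
        by (rule has_vector_derivative_profile_wronskian[OF U.C2_profile_axioms V.C2_profile_axioms])
          (use x in auto)
      then have "(w1 has_vector_derivative d x) (at x)"
        by (rule has_vector_derivative_transform_within_open[where S = "{1<..}"]) (use x in \<open>auto simp: w1_def\<close>)
      then show ?thesis
        using x by (simp add: h_def)
    qed
  qed (simp_all add: \<open>continuous_on {1..2} w1\<close>)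
  moreover have "w1 2 = 0" "w1 1 = c"
    using U.vanishes_beyond_2[of 2] by (simp_all add: w1_def w_def)
  ultimately have "(h has_integral - c) {1..2}"
    by simp
  then show thesis
    using \<open>continuous_on {1..2} h\<close> by (intro that) (auto simp: h_def d_def)
qed

lemma boundary_form_radial:
  assumes U: "admissible_profile S U U' U''" and V: "admissible_profile T V V' V''"
    and wronskian: "((\<lambda>x. (V x / x) * U' x - (V' x / x) * U x) \<longlongrightarrow> c) (at_right 1)"
  shows "L2_inner (radial (radial_Delta_ex U U' U'')) (radial V) - L2_inner (radial U) (radial (radial_Delta_ex V V' V''))
    = complex_of_real (- 2 * pi * c)"
proof -
  interpret U: admissible_profile S U U' U'' by fact
  interpret V: admissible_profile T V V' V'' by fact
  define LU where "LU = radial_Delta_ex U U' U''"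
  define LV where "LV = radial_Delta_ex V V' V''"
  obtain h where h: "continuous_on {1..2} h" "\<And>x. 1 < x \<Longrightarrow> h x = (LU x * V x - U x * LV x) / x"
    "(h has_integral - c) {1..2}"
    using has_integral_boundary_form_density[OF U V wronskian] unfolding LU_def LV_def by blast
  have "L2_inner (radial LU) (radial V) - L2_inner (radial U) (radial LV)
      = integral\<^sup>L dA (\<lambda>p. radial LU p * cnj (radial V p) - radial U p * cnj (radial LV p))"
    unfolding L2_inner_def LU_def LV_def
    by (intro Bochner_Integration.integral_diff[symmetric] integrable_L2_product
        U.L2_radial_profile V.L2_radial_profile)
  also have "\<dots> = integral\<^sup>L dA (radial (\<lambda>x. LU x * V x - U x * LV x))"
    by (rule arg_cong[where f = "integral\<^sup>L dA"]) (simp add: radial_def fun_eq_iff)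
  also have "\<dots> = complex_of_real (2 * pi * integral {1..2} h)"
  proof (rule integral_dA_radial[OF _ \<open>continuous_on {1..2} h\<close>])
    show "(\<lambda>x. LU x * V x - U x * LV x) \<in> borel_measurable borel"
      using U.profile_measurable V.profile_measurable U.borel_measurable_radial_Delta_ex
        V.borel_measurable_radial_Delta_ex unfolding LU_def LV_def by measurable
    show "LU x * V x - U x * LV x = x * h x" if "1 < x" "x \<le> 2" for x
      using that h(2)[of x] by simp
    show "LU x * V x - U x * LV x = 0" if "2 < x" for x
      using that U.vanishes_beyond_2 V.vanishes_beyond_2 by (simp add: LU_def LV_def radial_Delta_ex_def)
  qed
  finally show ?thesis
    using integral_unique[OF h(3)] by (simp add: LU_def LV_def)
qed

lemma not_essentially_self_adjoint_if_radial_wronskian: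
  assumes U: "admissible_profile S U U' U''" and V: "admissible_profile T V V' V''"
    and wronskian: "((\<lambda>x. (V x / x) * U' x - (V' x / x) * U x) \<longlongrightarrow> c) (at_right 1)" and "c \<noteq> 0"
  shows "\<not> essentially_self_adjoint Delta_ex_graph"
proof (rule not_essentially_self_adjoint_if_adjoint_not_symmetric)
  show "(radial U, radial (radial_Delta_ex U U' U'')) \<in> graph_adjoint Delta_ex_graph"
    "(radial V, radial (radial_Delta_ex V V' V'')) \<in> graph_adjoint Delta_ex_graph"
    using U V by (simp_all add: admissible_profile.radial_in_graph_adjoint)
  show "L2_inner (radial (radial_Delta_ex U U' U'')) (radial V) \<noteq> L2_inner (radial U) (radial (radial_Delta_ex V V' V''))"
    using boundary_form_radial[OF U V wronskian] \<open>c \<noteq> 0\<close> by auto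
qed (rule Delta_ex_graph_L2)

section \<open>Cut-off profiles\<close>

definition ramp :: "real \<Rightarrow> real" where
  "ramp x = max 0 (2 - x)"

(* cutoff1 and cutoff2 are the first two derivatives of cutoff0 k f = f k^3 when k' = -1.  They
   are used with k = ramp and, near x = 1 where real_asymp applies, with k x = 2 - x. *)
definition cutoff0 :: "(real \<Rightarrow> real) \<Rightarrow> (real \<Rightarrow> real) \<Rightarrow> real \<Rightarrow> real" where
  "cutoff0 k f x = f x * k x ^ 3"

definition cutoff1 :: "(real \<Rightarrow> real) \<Rightarrow> (real \<Rightarrow> real) \<Rightarrow> (real \<Rightarrow> real) \<Rightarrow> real \<Rightarrow> real" where
  "cutoff1 k f f' x = f' x * k x ^ 3 - 3 * f x * k x ^ 2"

definition cutoff2 ::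
  "(real \<Rightarrow> real) \<Rightarrow> (real \<Rightarrow> real) \<Rightarrow> (real \<Rightarrow> real) \<Rightarrow> (real \<Rightarrow> real) \<Rightarrow> real \<Rightarrow> real" where
  "cutoff2 k f f' f'' x = f'' x * k x ^ 3 - 6 * f' x * k x ^ 2 + 6 * f x * k x"

lemmas cutoff_defs = cutoff0_def cutoff1_def cutoff2_def

lemma cutoff_ramp_eq_linear:
  assumes "x \<le> 2"
  shows "cutoff0 ramp f x = cutoff0 (\<lambda>x. 2 - x) f x" "cutoff1 ramp f f' x = cutoff1 (\<lambda>x. 2 - x) f f' x"
    "cutoff2 ramp f f' f'' x = cutoff2 (\<lambda>x. 2 - x) f f' f'' x"
  using assms by (simp_all add: cutoff_defs ramp_def)

lemma cutoff_ramp_vanishes: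
  assumes "2 \<le> x"
  shows "cutoff0 ramp f x = 0" "cutoff1 ramp f f' x = 0" "cutoff2 ramp f f' f'' x = 0"
  using assms by (simp_all add: cutoff_defs ramp_def)

lemma eventually_le_2_at_right_1: "eventually (\<lambda>x. x \<le> 2) (at_right (1::real))"
  using eventually_at_right_real[of 1 2] by (auto elim: eventually_mono)

lemma has_real_derivative_cutoff_linear:
  assumes "(f has_real_derivative f' x) (at x)" "(f' has_real_derivative f'' x) (at x)"
  shows "(cutoff0 (\<lambda>x. 2 - x) f has_real_derivative cutoff1 (\<lambda>x. 2 - x) f f' x) (at x)"
    and "(cutoff1 (\<lambda>x. 2 - x) f f' has_real_derivative cutoff2 (\<lambda>x. 2 - x) f f' f'' x) (at x)"
  unfolding cutoff_defs[abs_def] using assms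
  by (auto intro!: derivative_eq_intros simp: algebra_simps power2_eq_square power3_eq_cube)

lemma has_real_derivative_cutoff_ramp:
  assumes "x \<noteq> 2" "(f has_real_derivative f' x) (at x)" "(f' has_real_derivative f'' x) (at x)"
  shows "(cutoff0 ramp f has_real_derivative cutoff1 ramp f f' x) (at x)"
    and "(cutoff1 ramp f f' has_real_derivative cutoff2 ramp f f' f'' x) (at x)"
proof -
  consider "x < 2" | "2 < x"
    using \<open>x \<noteq> 2\<close> by linarith
  then have "(cutoff0 ramp f has_real_derivative cutoff1 ramp f f' x) (at x)
    \<and> (cutoff1 ramp f f' has_real_derivative cutoff2 ramp f f' f'' x) (at x)"
  proof cases
    case 1
    note linear = has_real_derivative_cutoff_linear[where f = f and f' = f' and f'' = f'' and x = x, OF assms(2,3)]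
    have "(cutoff0 ramp f has_real_derivative cutoff1 (\<lambda>x. 2 - x) f f' x) (at x)"
      by (rule has_field_derivative_transform_within_open[OF linear(1), of "{..<2}"])
        (use 1 in \<open>auto simp: cutoff_ramp_eq_linear\<close>)
    moreover have "(cutoff1 ramp f f' has_real_derivative cutoff2 (\<lambda>x. 2 - x) f f' f'' x) (at x)"
      by (rule has_field_derivative_transform_within_open[OF linear(2), of "{..<2}"])
        (use 1 in \<open>auto simp: cutoff_ramp_eq_linear\<close>)
    ultimately show ?thesis
      using 1 by (simp add: cutoff_ramp_eq_linear)
  next
    case 2
    have "(cutoff0 ramp f has_real_derivative 0) (at x)" "(cutoff1 ramp f f' has_real_derivative 0) (at x)"
      by (rule has_field_derivative_transform_within_open[OF DERIV_const, of "{2<..}"];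
          use 2 in \<open>auto simp: cutoff_ramp_vanishes\<close>)+
    then show ?thesis
      using 2 by (simp add: cutoff_ramp_vanishes)
  qed
  then show "(cutoff0 ramp f has_real_derivative cutoff1 ramp f f' x) (at x)"
    "(cutoff1 ramp f f' has_real_derivative cutoff2 ramp f f' f'' x) (at x)"
    by auto
qed

lemma admissible_profile_cutoff:
  fixes f f' f'' :: "real \<Rightarrow> real"
  assumes measurable: "f \<in> borel_measurable borel" "f' \<in> borel_measurable borel" "f'' \<in> borel_measurable borel"
    and continuous: "continuous_on {1<..} f" "continuous_on {1<..} f'" "continuous_on {1<..} f''"
    and derivatives: "\<And>x. 1 < x \<Longrightarrow> (f has_real_derivative f' x) (at x)"
      "\<And>x. 1 < x \<Longrightarrow> (f' has_real_derivative f'' x) (at x)"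
    and "(f \<longlongrightarrow> l) (at_right 1)"
    and "(radial_Delta_ex (cutoff0 (\<lambda>x. 2 - x) f) (cutoff1 (\<lambda>x. 2 - x) f f') (cutoff2 (\<lambda>x. 2 - x) f f' f'')
          \<longlongrightarrow> m) (at_right 1)"
  shows "admissible_profile {2} (cutoff0 ramp f) (cutoff1 ramp f f') (cutoff2 ramp f f' f'')"
proof unfold_locales
  show "cutoff0 ramp f \<in> borel_measurable borel" "cutoff1 ramp f f' \<in> borel_measurable borel"
    "cutoff2 ramp f f' f'' \<in> borel_measurable borel"
    using measurable unfolding cutoff_defs[abs_def] ramp_def by measurable
  show "continuous_on {1<..} (cutoff0 ramp f)" "continuous_on {1<..} (cutoff1 ramp f f')"
    "continuous_on {1<..} (cutoff2 ramp f f' f'')"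
    using continuous unfolding cutoff_defs[abs_def] ramp_def by (auto intro!: continuous_intros)
  show "(cutoff0 ramp f has_real_derivative cutoff1 ramp f f' x) (at x)"
    "(cutoff1 ramp f f' has_real_derivative cutoff2 ramp f f' f'' x) (at x)" if "1 < x" "x \<notin> {2}" for x
    using that derivatives by (auto intro: has_real_derivative_cutoff_ramp)
  show "cutoff0 ramp f x = 0 \<and> cutoff1 ramp f f' x = 0 \<and> cutoff2 ramp f f' f'' x = 0" if "2 \<le> x" for x
    using that by (simp add: cutoff_ramp_vanishes)
  have "(cutoff0 (\<lambda>x. 2 - x) f \<longlongrightarrow> l * (2 - 1) ^ 3) (at_right 1)"
    unfolding cutoff0_def using \<open>(f \<longlongrightarrow> l) (at_right 1)\<close> by (intro tendsto_intros)
  moreover have "eventually (\<lambda>x. cutoff0 (\<lambda>x. 2 - x) f x = cutoff0 ramp f x) (at_right 1)"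
    using eventually_le_2_at_right_1 by eventually_elim (simp add: cutoff_ramp_eq_linear)
  ultimately show "\<exists>l. (cutoff0 ramp f \<longlongrightarrow> l) (at_right 1)"
    by (blast intro: Lim_transform_eventually)
  have "eventually (\<lambda>x. radial_Delta_ex (cutoff0 (\<lambda>x. 2 - x) f) (cutoff1 (\<lambda>x. 2 - x) f f')
      (cutoff2 (\<lambda>x. 2 - x) f f' f'') x = radial_Delta_ex (cutoff0 ramp f) (cutoff1 ramp f f') (cutoff2 ramp f f' f'') x)
      (at_right 1)"
    using eventually_le_2_at_right_1 by eventually_elim (simp add: radial_Delta_ex_def cutoff_ramp_eq_linear)
  with \<open>(radial_Delta_ex _ _ _ \<longlongrightarrow> m) (at_right 1)\<close>
  show "\<exists>m. (radial_Delta_ex (cutoff0 ramp f) (cutoff1 ramp f f') (cutoff2 ramp f f' f'') \<longlongrightarrow> m) (at_right 1)"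
    by (blast intro: Lim_transform_eventually)
qed simp

(* The coefficient 27/32 cancels the ln (x - 1) singularity of radial_Delta_ex of the cut-off
   profile at x = 1. *)
definition log_profile :: "real \<Rightarrow> real" where
  "log_profile x = 1 - (x - 1) * ln (x - 1) / 4 - 27 / 32 * (x - 1)\<^sup>2 * ln (x - 1)"

definition log_profile' :: "real \<Rightarrow> real" where
  "log_profile' x = - (ln (x - 1) + 1) / 4 - 27 / 32 * (2 * (x - 1) * ln (x - 1) + (x - 1))"

definition log_profile'' :: "real \<Rightarrow> real" where
  "log_profile'' x = - 1 / (4 * (x - 1)) - 27 / 32 * (2 * ln (x - 1) + 3)"

lemmas log_profile_defs = log_profile_def log_profile'_def log_profile''_def

lemma log_profile_derivatives:
  assumes "1 < x"
  shows "(log_profile has_real_derivative log_profile' x) (at x)"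
    and "(log_profile' has_real_derivative log_profile'' x) (at x)"
  unfolding log_profile_def[abs_def] log_profile'_def[abs_def] log_profile''_def using assms
  by (auto intro!: derivative_eq_intros simp: divide_simps) (simp_all add: algebra_simps power2_eq_square)

lemma admissible_log_profile:
  "admissible_profile {2} (cutoff0 ramp log_profile) (cutoff1 ramp log_profile log_profile')
     (cutoff2 ramp log_profile log_profile' log_profile'')"
proof (rule admissible_profile_cutoff)
  show "log_profile \<in> borel_measurable borel" "log_profile' \<in> borel_measurable borel"
    "log_profile'' \<in> borel_measurable borel"
    unfolding log_profile_defs[abs_def] by measurable
  show "continuous_on {1<..} log_profile" "continuous_on {1<..} log_profile'" "continuous_on {1<..} log_profile''"
    unfolding log_profile_defs[abs_def] by (auto intro!: continuous_intros)
  show "(log_profile \<longlongrightarrow> 1) (at_right 1)"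
    unfolding log_profile_def[abs_def] by real_asymp
  show "(radial_Delta_ex (cutoff0 (\<lambda>x. 2 - x) log_profile) (cutoff1 (\<lambda>x. 2 - x) log_profile log_profile')
      (cutoff2 (\<lambda>x. 2 - x) log_profile log_profile' log_profile'') \<longlongrightarrow> 267 / 32) (at_right 1)"
    unfolding radial_Delta_ex_def[abs_def] cutoff_defs log_profile_defs potential_def by real_asymp
qed (use log_profile_derivatives in auto)

lemma admissible_linear_profile:
  "admissible_profile {2} (cutoff0 ramp (\<lambda>x. x - 1)) (cutoff1 ramp (\<lambda>x. x - 1) (\<lambda>_. 1))
     (cutoff2 ramp (\<lambda>x. x - 1) (\<lambda>_. 1) (\<lambda>_. 0))"
proof (rule admissible_profile_cutoff)
  show "((\<lambda>x. x - 1) \<longlongrightarrow> 0) (at_right (1::real))"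
    by real_asymp
  show "(radial_Delta_ex (cutoff0 (\<lambda>x. 2 - x) (\<lambda>x. x - 1)) (cutoff1 (\<lambda>x. 2 - x) (\<lambda>x. x - 1) (\<lambda>_. 1))
      (cutoff2 (\<lambda>x. 2 - x) (\<lambda>x. x - 1) (\<lambda>_. 1) (\<lambda>_. 0)) \<longlongrightarrow> - 27 / 4) (at_right 1)"
    unfolding radial_Delta_ex_def[abs_def] cutoff_defs potential_def by real_asymp
qed (auto intro!: derivative_eq_intros continuous_intros)

lemma wronskian_log_linear:
  "((\<lambda>x. (cutoff0 ramp (\<lambda>x. x - 1) x / x) * cutoff1 ramp log_profile log_profile' x
      - (cutoff1 ramp (\<lambda>x. x - 1) (\<lambda>_. 1) x / x) * cutoff0 ramp log_profile x) \<longlongrightarrow> - 1) (at_right 1)"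
proof -
  have "((\<lambda>x. (cutoff0 (\<lambda>x. 2 - x) (\<lambda>x. x - 1) x / x) * cutoff1 (\<lambda>x. 2 - x) log_profile log_profile' x
      - (cutoff1 (\<lambda>x. 2 - x) (\<lambda>x. x - 1) (\<lambda>_. 1) x / x) * cutoff0 (\<lambda>x. 2 - x) log_profile x) \<longlongrightarrow> - 1)
      (at_right 1)"
    unfolding cutoff_defs log_profile_defs by real_asymp
  moreover have "eventually (\<lambda>x. (cutoff0 (\<lambda>x. 2 - x) (\<lambda>x. x - 1) x / x) * cutoff1 (\<lambda>x. 2 - x) log_profile log_profile' x
      - (cutoff1 (\<lambda>x. 2 - x) (\<lambda>x. x - 1) (\<lambda>_. 1) x / x) * cutoff0 (\<lambda>x. 2 - x) log_profile x
      = (cutoff0 ramp (\<lambda>x. x - 1) x / x) * cutoff1 ramp log_profile log_profile' x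
      - (cutoff1 ramp (\<lambda>x. x - 1) (\<lambda>_. 1) x / x) * cutoff0 ramp log_profile x) (at_right 1)"
    using eventually_le_2_at_right_1 by eventually_elim (simp add: cutoff_ramp_eq_linear)
  ultimately show ?thesis
    by (rule Lim_transform_eventually)
qed

theorem proposition4:
  shows "\<not> essentially_self_adjoint Delta_ex_graph"
  by (rule not_essentially_self_adjoint_if_radial_wronskian[OF admissible_log_profile
        admissible_linear_profile wronskian_log_linear]) simp

end
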